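(* Let $n\ge2$ and $\mathbf{x}\in[0,1]^n$ with $0\le x_1\le\dots\le x_n\le1$ and $\sum_{i=1}^nx_i\le1$. Let $f:2^{[n]}\to\mathbb{R}_+$ be monotone submodular and suppose either (i) $f(\{n\})=\max_{i\in[n]}f(\{i\})$, or (ii) $f(\{i\})$ is the same constant for all $i\in[n]$. Then $f^{+}(\mathbf{x})/f^{++}(\mathbf{x})\le4/3$ (with the convention $0/0=1$).
   Context: $[n]=\{1,\dots,n\}$. A set function $f:2^{[n]}\to\mathbb{R}_+$ is monotone if $f(S)\le f(T)$ for $S\subseteq T$, submodular if $f(S)+f(T)\ge f(S\cap T)+f(S\cup T)$. For $\mathbf{x}\in[0,1]^n$: the concave closure $f^{+}(\mathbf{x})=\max\sum_{S\subseteq[n]}\theta(S)f(S)$ over $\theta:2^{[n]}\to\mathbb{R}_{\ge0}$ with $\sum_S\theta(S)=1$ and $\sum_{S\ni i}\theta(S)=x_i$ for all $i$; the upper pairwise independent extension $f^{++}(\mathbf{x})$ is the same maximum with the additional constraints $\sum_{S\ni i,j}\theta(S)=x_ix_j$ for all $i<j$. *)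

theory Defs
  imports Main "HOL-Library.Extended_Real" Complex_Main
begin

text \<open>Ground set [n] = {1..n}; set functions are f :: nat set => real, only
  their values on subsets of {1..n} matter.\<close>

definition monotone_setfun :: "nat \<Rightarrow> (nat set \<Rightarrow> real) \<Rightarrow> bool" where
  "monotone_setfun n f \<longleftrightarrow>
     (\<forall>S T. S \<subseteq> T \<and> T \<subseteq> {1..n} \<longrightarrow> f S \<le> f T)"

definition submodular_setfun :: "nat \<Rightarrow> (nat set \<Rightarrow> real) \<Rightarrow> bool" where
  "submodular_setfun n f \<longleftrightarrow>
     (\<forall>S T. S \<subseteq> {1..n} \<and> T \<subseteq> {1..n} \<longrightarrow> f S + f T \<ge> f (S \<inter> T) + f (S \<union> T))"

definition cc_feasible :: "nat \<Rightarrow> (nat \<Rightarrow> real) \<Rightarrow> (nat set \<Rightarrow> real) \<Rightarrow> bool" where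
  "cc_feasible n x \<theta> \<longleftrightarrow>
     (\<forall>S\<in>Pow {1..n}. \<theta> S \<ge> 0) \<and>
     sum \<theta> (Pow {1..n}) = 1 \<and>
     (\<forall>i\<in>{1..n}. sum \<theta> {S\<in>Pow {1..n}. i \<in> S} = x i)"

definition pi_feasible :: "nat \<Rightarrow> (nat \<Rightarrow> real) \<Rightarrow> (nat set \<Rightarrow> real) \<Rightarrow> bool" where
  "pi_feasible n x \<theta> \<longleftrightarrow>
     cc_feasible n x \<theta> \<and>
     (\<forall>i\<in>{1..n}. \<forall>j\<in>{1..n}. i < j \<longrightarrow>
        sum \<theta> {S\<in>Pow {1..n}. i \<in> S \<and> j \<in> S} = x i * x j)"

definition concave_closure :: "nat \<Rightarrow> (nat set \<Rightarrow> real) \<Rightarrow> (nat \<Rightarrow> real) \<Rightarrow> real" where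
  "concave_closure n f x =
     Sup {(\<Sum>S\<in>Pow {1..n}. \<theta> S * f S) | \<theta>. cc_feasible n x \<theta>}"

definition upper_pi_ext :: "nat \<Rightarrow> (nat set \<Rightarrow> real) \<Rightarrow> (nat \<Rightarrow> real) \<Rightarrow> real" where
  "upper_pi_ext n f x =
     Sup {(\<Sum>S\<in>Pow {1..n}. \<theta> S * f S) | \<theta>. pi_feasible n x \<theta>}"

end

theory Submission
  imports Defs
begin

text \<open>Submodularity bounds \<open>f S\<close> by \<open>f {} + \<Sum>i\<in>S. (f {i} - f {})\<close>, so \<open>f\<^sup>+(x)\<close> is at most
  \<open>U = f {} + x\<^sub>n G + B\<close>, where \<open>G = f {n} - f {}\<close> and \<open>B = \<Sum>i<n. x\<^sub>i (f {i} - f {})\<close>.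
  For \<open>f\<^sup>+\<^sup>+(x)\<close> we exhibit a pairwise independent distribution: with probability \<open>x\<^sub>n\<^sup>2\<close>
  take \<open>n\<close> together with independent coins \<open>i < n\<close> of bias \<open>x\<^sub>i / x\<^sub>n\<close>, with probability
  \<open>x\<^sub>n (1 - x\<^sub>n)\<close> take \<open>{n}\<close>, with probability \<open>(1 - x\<^sub>n) x\<^sub>i\<close> take \<open>{i}\<close>, and \<open>{}\<close> otherwise.
  By monotonicity its value is at least \<open>V = f {} + x\<^sub>n G + (1 - x\<^sub>n) B\<close>. Since \<open>f {n}\<close> is the
  largest singleton value and \<open>\<Sum>i<n. x\<^sub>i \<le> 1 - x\<^sub>n\<close>, we have \<open>0 \<le> B \<le> (1 - x\<^sub>n) G\<close>, and
  then \<open>3 U \<le> 4 V\<close> reduces to \<open>(2 x\<^sub>n - 1)\<^sup>2 G \<ge> 0\<close>.\<close>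

definition product_dist :: "'a set \<Rightarrow> ('a \<Rightarrow> real) \<Rightarrow> 'a set \<Rightarrow> real" where
  "product_dist A p T = (\<Prod>i\<in>T. p i) * (\<Prod>i\<in>A - T. 1 - p i)"

lemma product_dist_nonneg:
  assumes "\<forall>i\<in>A. 0 \<le> p i \<and> p i \<le> 1" "T \<subseteq> A"
  shows "0 \<le> product_dist A p T"
  using assms unfolding product_dist_def by (intro mult_nonneg_nonneg prod_nonneg) auto

lemma sum_product_dist_supersets:
  assumes "finite A" "K \<subseteq> A"
  shows "(\<Sum>T\<in>Pow A. if K \<subseteq> T then product_dist A p T else 0) = (\<Prod>i\<in>K. p i)"
proof -
  define q where "q i = (if i \<in> K then 0 else 1 - p i)" for i
  have "(\<Prod>i\<in>K. p i) = (\<Prod>i\<in>A. p i + q i)"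
    using assms by (simp add: q_def prod.subset_diff[of K A] finite_subset)
  also have "\<dots> = (\<Sum>T\<in>Pow A. (\<Prod>i\<in>T. p i) * (\<Prod>i\<in>A - T. q i))"
    by (rule prod_add[OF assms(1)])
  also have "\<dots> = (\<Sum>T\<in>Pow A. if K \<subseteq> T then product_dist A p T else 0)"
  proof (rule sum.cong[OF refl])
    fix T assume "T \<in> Pow A"
    show "(\<Prod>i\<in>T. p i) * (\<Prod>i\<in>A - T. q i) = (if K \<subseteq> T then product_dist A p T else 0)"
    proof (cases "K \<subseteq> T")
      case True
      then have "(\<Prod>i\<in>A - T. q i) = (\<Prod>i\<in>A - T. 1 - p i)"
        by (intro prod.cong) (auto simp: q_def)
      with True show ?thesis by (simp add: product_dist_def)
    next
      case False
      then have "(\<Prod>i\<in>A - T. q i) = 0"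
        using assms by (intro prod_zero) (auto simp: q_def)
      with False show ?thesis by simp
    qed
  qed
  finally show ?thesis by simp
qed

lemma submodular_le_sum_singletons:
  assumes "submodular_setfun n f" "S \<subseteq> {1..n}"
  shows "f S \<le> f {} + (\<Sum>i\<in>S. f {i} - f {})"
proof -
  have "finite S" using assms(2) finite_subset by blast
  then show ?thesis using assms(2)
  proof (induction S rule: finite_induct)
    case empty then show ?case by simp
  next
    case (insert a S)
    then have "f (S \<inter> {a}) + f (S \<union> {a}) \<le> f S + f {a}"
      using assms(1) insert.prems unfolding submodular_setfun_def
      by (metis empty_subsetI insert_subset)
    moreover have "S \<inter> {a} = {}" "S \<union> {a} = insert a S" using insert.hyps by auto
    ultimately show ?case using insert by simp
  qed
qed

lemma cc_feasible_value_le: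
  assumes "submodular_setfun n f" "cc_feasible n x \<theta>"
  shows "(\<Sum>S\<in>Pow {1..n}. \<theta> S * f S) \<le> f {} + (\<Sum>i\<in>{1..n}. x i * (f {i} - f {}))"
proof -
  let ?N = "{1..n}"
  have \<theta>_nonneg: "\<forall>S\<in>Pow ?N. 0 \<le> \<theta> S" and \<theta>_total: "sum \<theta> (Pow ?N) = 1"
    using assms(2) unfolding cc_feasible_def by auto
  have \<theta>_marginal: "(\<Sum>S\<in>Pow ?N. if i \<in> S then \<theta> S else 0) = x i" if "i \<in> ?N" for i
    using assms(2) that unfolding cc_feasible_def by (simp add: sum.inter_filter[symmetric])
  have "(\<Sum>S\<in>Pow ?N. \<theta> S * f S) \<le> (\<Sum>S\<in>Pow ?N. \<theta> S * (f {} + (\<Sum>i\<in>S. f {i} - f {})))"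
    using \<theta>_nonneg submodular_le_sum_singletons[OF assms(1)] by (intro sum_mono mult_left_mono) auto
  also have "\<dots> = (\<Sum>S\<in>Pow ?N. \<theta> S * f {} + (\<Sum>i\<in>?N. (if i \<in> S then \<theta> S else 0) * (f {i} - f {})))"
  proof (intro sum.cong refl)
    fix S assume "S \<in> Pow ?N"
    then have "(\<Sum>i\<in>S. f {i} - f {}) = (\<Sum>i\<in>?N. if i \<in> S then f {i} - f {} else 0)"
      by (simp add: sum.If_cases Int_absorb1)
    then show "\<theta> S * (f {} + (\<Sum>i\<in>S. f {i} - f {}))
        = \<theta> S * f {} + (\<Sum>i\<in>?N. (if i \<in> S then \<theta> S else 0) * (f {i} - f {}))"
      by (simp add: distrib_left sum_distrib_left) (intro sum.cong, auto)
  qed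
  also have "\<dots> = f {} * sum \<theta> (Pow ?N)
      + (\<Sum>i\<in>?N. (\<Sum>S\<in>Pow ?N. if i \<in> S then \<theta> S else 0) * (f {i} - f {}))"
    by (simp add: sum.distrib sum_distrib_left sum_distrib_right mult.commute) (rule sum.swap)
  also have "\<dots> = f {} + (\<Sum>i\<in>?N. x i * (f {i} - f {}))"
    using \<theta>_total \<theta>_marginal by simp
  finally show ?thesis .
qed

lemma concave_closure_le:
  assumes "submodular_setfun n f" "cc_feasible n x \<theta>"
  shows "concave_closure n f x \<le> f {} + (\<Sum>i\<in>{1..n}. x i * (f {i} - f {}))"
  unfolding concave_closure_def
  using assms cc_feasible_value_le[OF assms(1)] by (intro cSup_least) auto

text \<open>Submodularity only serves to bound the supremum from above; without it \<open>Sup\<close> is junk.\<close>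
lemma le_upper_pi_ext:
  assumes "submodular_setfun n f" "pi_feasible n x \<theta>"
  shows "(\<Sum>S\<in>Pow {1..n}. \<theta> S * f S) \<le> upper_pi_ext n f x"
  unfolding upper_pi_ext_def
proof (rule cSup_upper)
  show "bdd_above {\<Sum>S\<in>Pow {1..n}. \<theta> S * f S |\<theta>. pi_feasible n x \<theta>}"
    using cc_feasible_value_le[OF assms(1)] unfolding bdd_above_def pi_feasible_def by blast
qed (use assms(2) in blast)

lemma sum_Pow_point_mass:
  fixes g :: "'a set \<Rightarrow> real"
  assumes "finite N" "T \<subseteq> N"
  shows "(\<Sum>S\<in>Pow N. (if S = T then c else 0) * g S) = c * g T"
proof -
  have "(\<Sum>S\<in>Pow N. (if S = T then c else 0) * g S) = (\<Sum>S\<in>Pow N. if S = T then c * g T else 0)"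
    by (intro sum.cong) auto
  with assms show ?thesis by simp
qed

lemma sum_Pow_insert_split:
  fixes g h :: "'a set \<Rightarrow> real"
  assumes "finite A" "a \<notin> A"
  shows "(\<Sum>S\<in>Pow (insert a A). (if a \<in> S then h (S - {a}) else 0) * g S)
       = (\<Sum>T\<in>Pow A. h T * g (insert a T))"
proof -
  have inj: "inj_on (insert a) (Pow A)"
    using assms(2) by (intro inj_onI) (metis PowD insert_ident subset_iff)
  have "(\<Sum>S\<in>Pow A. (if a \<in> S then h (S - {a}) else 0) * g S) = 0"
    using assms(2) by (intro sum.neutral) auto
  moreover have "(\<Sum>S\<in>insert a ` Pow A. (if a \<in> S then h (S - {a}) else 0) * g S)
      = (\<Sum>S\<in>insert a ` Pow A. h (S - {a}) * g S)"
    by (intro sum.cong) auto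
  ultimately have "(\<Sum>S\<in>Pow (insert a A). (if a \<in> S then h (S - {a}) else 0) * g S)
      = (\<Sum>S\<in>insert a ` Pow A. h (S - {a}) * g S)"
    unfolding Pow_insert using assms by (subst sum.union_disjoint) auto
  also have "\<dots> = (\<Sum>T\<in>Pow A. h (insert a T - {a}) * g (insert a T))"
    by (simp add: sum.reindex[OF inj])
  also have "\<dots> = (\<Sum>T\<in>Pow A. h T * g (insert a T))"
    using assms(2) by (intro sum.cong refl) (metis Diff_insert_absorb PowD subsetD)
  finally show ?thesis .
qed

lemma sum_Pow_filter_indicator:
  fixes \<theta> :: "'a set \<Rightarrow> real"
  assumes "finite N"
  shows "sum \<theta> {S\<in>Pow N. P S} = (\<Sum>S\<in>Pow N. \<theta> S * (if P S then 1 else 0))"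
proof -
  have "sum \<theta> {S\<in>Pow N. P S} = (\<Sum>S\<in>Pow N. if P S then \<theta> S else 0)"
    using assms by (intro sum.inter_filter) simp
  also have "\<dots> = (\<Sum>S\<in>Pow N. \<theta> S * (if P S then 1 else 0))"
    by (intro sum.cong) auto
  finally show ?thesis .
qed

definition pi_witness :: "nat \<Rightarrow> (nat \<Rightarrow> real) \<Rightarrow> nat set \<Rightarrow> real" where
  "pi_witness n x S =
     (if n \<in> S then x n ^ 2 * product_dist {1..<n} (\<lambda>i. x i / x n) (S - {n}) else 0)
   + (if S = {n} then x n * (1 - x n) else 0)
   + (\<Sum>i\<in>{1..<n}. if S = {i} then (1 - x n) * x i else 0)
   + (if S = {} then (1 - x n) * (1 - (\<Sum>i\<in>{1..<n}. x i)) else 0)"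

lemma sum_pi_witness:
  fixes g :: "nat set \<Rightarrow> real"
  assumes "1 \<le> n"
  shows "(\<Sum>S\<in>Pow {1..n}. pi_witness n x S * g S) =
     x n ^ 2 * (\<Sum>T\<in>Pow {1..<n}. product_dist {1..<n} (\<lambda>i. x i / x n) T * g (insert n T))
   + x n * (1 - x n) * g {n} + (1 - x n) * (\<Sum>i\<in>{1..<n}. x i * g {i})
   + (1 - x n) * (1 - (\<Sum>i\<in>{1..<n}. x i)) * g {}"
proof -
  let ?A = "{1..<n}" and ?p = "product_dist {1..<n} (\<lambda>i. x i / x n)"
  have N: "{1..n} = insert n ?A" using assms by auto
  have "(\<Sum>S\<in>Pow {1..n}. (if n \<in> S then x n ^ 2 * ?p (S - {n}) else 0) * g S)
      = x n ^ 2 * (\<Sum>T\<in>Pow ?A. ?p T * g (insert n T))"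
    unfolding N by (subst sum_Pow_insert_split) (auto simp: sum_distrib_left mult.assoc)
  moreover have "(\<Sum>S\<in>Pow {1..n}. (\<Sum>i\<in>?A. if S = {i} then (1 - x n) * x i else 0) * g S)
      = (1 - x n) * (\<Sum>i\<in>?A. x i * g {i})"
  proof -
    have "(\<Sum>S\<in>Pow {1..n}. (\<Sum>i\<in>?A. if S = {i} then (1 - x n) * x i else 0) * g S)
        = (\<Sum>i\<in>?A. \<Sum>S\<in>Pow {1..n}. (if S = {i} then (1 - x n) * x i else 0) * g S)"
      unfolding sum_distrib_right by (rule sum.swap)
    also have "\<dots> = (\<Sum>i\<in>?A. (1 - x n) * x i * g {i})"
      by (intro sum.cong refl sum_Pow_point_mass) auto
    finally show ?thesis by (simp add: sum_distrib_left mult.assoc)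
  qed
  moreover have "(\<Sum>S\<in>Pow {1..n}. (if S = {n} then x n * (1 - x n) else 0) * g S)
      = x n * (1 - x n) * g {n}"
    using assms by (simp add: sum_Pow_point_mass)
  moreover have "(\<Sum>S\<in>Pow {1..n}. (if S = {} then (1 - x n) * (1 - (\<Sum>i\<in>?A. x i)) else 0) * g S)
      = (1 - x n) * (1 - (\<Sum>i\<in>?A. x i)) * g {}"
    by (simp add: sum_Pow_point_mass)
  ultimately show ?thesis
    unfolding pi_witness_def distrib_right sum.distrib by simp
qed

lemma four_thirds_bound:
  fixes F G B X :: real
  assumes "0 \<le> F" "0 \<le> G" "0 \<le> X" "0 \<le> B" "B \<le> (1 - X) * G"
  shows "3 * (F + X * G + B) \<le> 4 * (F + X * G + (1 - X) * B)"
proof -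
  have "0 \<le> X * G + (1 - 4 * X) * B"
  proof (cases "4 * X \<le> 1")
    case True
    with assms show ?thesis by (simp add: mult_nonneg_nonneg)
  next
    case False
    then have "(1 - 4 * X) * ((1 - X) * G) \<le> (1 - 4 * X) * B"
      using assms(5) by (intro mult_left_mono_neg) auto
    moreover have "X * G + (1 - 4 * X) * ((1 - X) * G) = (2 * X - 1)\<^sup>2 * G"
      by (simp add: algebra_simps power2_eq_square)
    moreover have "0 \<le> (2 * X - 1)\<^sup>2 * G"
      using assms(2) by simp
    ultimately show ?thesis by linarith
  qed
  with assms(1) show ?thesis by (simp add: algebra_simps)
qed

context
  fixes n :: nat and x :: "nat \<Rightarrow> real"
  assumes n_pos: "1 \<le> n"
    and x_nonneg: "\<forall>i\<in>{1..n}. 0 \<le> x i"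
    and x_le_top: "\<forall>i\<in>{1..<n}. x i \<le> x n"
    and x_sum_le: "(\<Sum>i=1..n. x i) \<le> 1"
begin

lemma top_nonneg: "0 \<le> x n"
  using x_nonneg n_pos by simp

lemma sum_below_top_le: "(\<Sum>i\<in>{1..<n}. x i) \<le> 1 - x n"
  using x_sum_le n_pos by (simp add: sum.last_plus)

lemma top_le_one: "x n \<le> 1"
proof -
  have "0 \<le> (\<Sum>i\<in>{1..<n}. x i)" using x_nonneg by (intro sum_nonneg) auto
  with sum_below_top_le show ?thesis by linarith
qed

lemma rescaled_in_unit: "\<forall>i\<in>{1..<n}. 0 \<le> x i / x n \<and> x i / x n \<le> 1"
  using x_nonneg x_le_top top_nonneg by (auto simp: divide_le_eq_1)

text \<open>If \<open>x n = 0\<close> the quotients are junk, but then every \<open>x i\<close> below the top vanishes too.\<close>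
lemma top_times_rescaled: "i \<in> {1..<n} \<Longrightarrow> x n * (x i / x n) = x i"
  using x_nonneg x_le_top by (cases "x n = 0") force+

lemma pi_witness_nonneg:
  assumes "S \<subseteq> {1..n}"
  shows "0 \<le> pi_witness n x S"
proof -
  have "S - {n} \<subseteq> {1..<n}" using assms by auto
  then have "0 \<le> product_dist {1..<n} (\<lambda>i. x i / x n) (S - {n})"
    by (rule product_dist_nonneg[OF rescaled_in_unit])
  moreover have "\<forall>i\<in>{1..<n}. 0 \<le> x i" using x_nonneg by simp
  ultimately show ?thesis
    unfolding pi_witness_def using top_nonneg top_le_one sum_below_top_le
    by (intro add_nonneg_nonneg sum_nonneg) simp_all
qed

lemma product_dist_rescaled_total: "(\<Sum>T\<in>Pow {1..<n}. product_dist {1..<n} (\<lambda>i. x i / x n) T) = 1"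
  using sum_product_dist_supersets[of "{1..<n}" "{}"] by simp

lemma pi_witness_total: "sum (pi_witness n x) (Pow {1..n}) = 1"
  using sum_pi_witness[OF n_pos, of x "\<lambda>_. 1"] product_dist_rescaled_total
  by (simp add: algebra_simps power2_eq_square)

lemma pi_witness_marginal:
  assumes "i \<in> {1..n}"
  shows "sum (pi_witness n x) {S\<in>Pow {1..n}. i \<in> S} = x i"
proof (cases "i = n")
  case True
  then show ?thesis
    unfolding sum_Pow_filter_indicator[OF finite_atLeastAtMost] sum_pi_witness[OF n_pos]
    using product_dist_rescaled_total by (simp add: algebra_simps power2_eq_square)
next
  case False
  with assms have i: "i \<in> {1..<n}" by simp
  have "(\<Sum>T\<in>Pow {1..<n}. product_dist {1..<n} (\<lambda>i. x i / x n) T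
      * (if i \<in> insert n T then 1 else 0)) = x i / x n"
    using sum_product_dist_supersets[of "{1..<n}" "{i}"] i False
    by (simp add: if_distrib cong: if_cong)
  moreover have "(\<Sum>k\<in>{1..<n}. x k * (if i \<in> {k} then 1 else 0)) = x i"
    using i by (simp add: if_distrib cong: if_cong)
  ultimately show ?thesis
    unfolding sum_Pow_filter_indicator[OF finite_atLeastAtMost] sum_pi_witness[OF n_pos]
    using False top_times_rescaled[OF i] by (simp add: algebra_simps power2_eq_square)
qed

lemma pi_witness_pair:
  assumes "i \<in> {1..n}" "j \<in> {1..n}" "i < j"
  shows "sum (pi_witness n x) {S\<in>Pow {1..n}. i \<in> S \<and> j \<in> S} = x i * x j"
proof -
  let ?p = "product_dist {1..<n} (\<lambda>i. x i / x n)"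
  from assms have i: "i \<in> {1..<n}" by simp
  have no_singletons: "(\<Sum>k\<in>{1..<n}. x k * (if i \<in> {k} \<and> j \<in> {k} then 1 else 0)) = 0"
    using \<open>i < j\<close> by (intro sum.neutral) auto
  show ?thesis
  proof (cases "j = n")
    case True
    have "(\<Sum>T\<in>Pow {1..<n}. ?p T * (if i \<in> insert n T \<and> j \<in> insert n T then 1 else 0))
        = x i / x n"
      using sum_product_dist_supersets[of "{1..<n}" "{i}"] i True
      by (simp add: if_distrib cong: if_cong)
    then show ?thesis
      unfolding sum_Pow_filter_indicator[OF finite_atLeastAtMost] sum_pi_witness[OF n_pos]
        no_singletons
      using True \<open>i < j\<close> top_times_rescaled[OF i] by (simp add: power2_eq_square)
  next
    case False
    with assms have j: "j \<in> {1..<n}" by simp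
    have "(\<Sum>T\<in>Pow {1..<n}. ?p T * (if i \<in> insert n T \<and> j \<in> insert n T then 1 else 0))
        = (x i / x n) * (x j / x n)"
      using sum_product_dist_supersets[of "{1..<n}" "{i, j}"] i j \<open>i < j\<close>
      by (simp add: if_distrib cong: if_cong)
    moreover have "x n ^ 2 * (x i / x n * (x j / x n)) = (x n * (x i / x n)) * (x n * (x j / x n))"
      by (simp only: power2_eq_square mult_ac)
    ultimately show ?thesis
      unfolding sum_Pow_filter_indicator[OF finite_atLeastAtMost] sum_pi_witness[OF n_pos]
        no_singletons
      using \<open>i < j\<close> top_times_rescaled[OF i] top_times_rescaled[OF j] by simp
  qed
qed

lemma pi_witness_feasible: "pi_feasible n x (pi_witness n x)"
  unfolding pi_feasible_def cc_feasible_def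
  using pi_witness_nonneg pi_witness_total pi_witness_marginal pi_witness_pair
  by (intro conjI ballI impI) auto

lemma pi_witness_value_ge:
  assumes "monotone_setfun n f"
  shows "f {} + x n * (f {n} - f {}) + (1 - x n) * (\<Sum>i\<in>{1..<n}. x i * (f {i} - f {}))
    \<le> (\<Sum>S\<in>Pow {1..n}. pi_witness n x S * f S)"
proof -
  let ?A = "{1..<n}" and ?p = "product_dist {1..<n} (\<lambda>i. x i / x n)"
  define P where "P = (\<Sum>T\<in>Pow ?A. ?p T * f (insert n T))"
  define s where "s = (\<Sum>i\<in>?A. x i)"
  define W where "W = (\<Sum>i\<in>?A. x i * f {i})"
  have "f {n} \<le> f (insert n T)" if "T \<subseteq> ?A" for T
  proof -
    have "insert n T \<subseteq> {1..n}" using that n_pos by auto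
    then show ?thesis
      using assms unfolding monotone_setfun_def by (metis insert_is_Un sup_ge1)
  qed
  then have "(\<Sum>T\<in>Pow ?A. ?p T * f {n}) \<le> P"
    unfolding P_def using product_dist_nonneg[OF rescaled_in_unit]
    by (intro sum_mono mult_left_mono) auto
  with product_dist_rescaled_total have top: "x n ^ 2 * f {n} \<le> x n ^ 2 * P"
    by (intro mult_left_mono) (simp_all flip: sum_distrib_right)
  have gains: "(\<Sum>i\<in>?A. x i * (f {i} - f {})) = W - s * f {}"
    unfolding W_def s_def by (simp add: right_diff_distrib sum_subtractf sum_distrib_right)
  have expansion: "(\<Sum>S\<in>Pow {1..n}. pi_witness n x S * f S)
      = x n ^ 2 * P + x n * (1 - x n) * f {n} + (1 - x n) * W + (1 - x n) * (1 - s) * f {}"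
    unfolding sum_pi_witness[OF n_pos] P_def W_def s_def ..
  show ?thesis
    using top unfolding gains expansion by (simp add: algebra_simps power2_eq_square)
qed

lemma concave_closure_le_four_thirds_upper_pi_ext:
  assumes "0 \<le> f {}" "monotone_setfun n f" "submodular_setfun n f"
    and top_max: "\<forall>i\<in>{1..n}. f {i} \<le> f {n}"
  shows "concave_closure n f x \<le> 4/3 * upper_pi_ext n f x"
proof -
  let ?A = "{1..<n}"
  define G where "G = f {n} - f {}"
  define B where "B = (\<Sum>i\<in>?A. x i * (f {i} - f {}))"
  have gain_nonneg: "f {} \<le> f {i}" if "i \<in> {1..n}" for i
    using assms(2) that unfolding monotone_setfun_def by simp
  have "0 \<le> G" using gain_nonneg n_pos unfolding G_def by simp
  have "0 \<le> B"
    unfolding B_def using x_nonneg gain_nonneg by (intro sum_nonneg mult_nonneg_nonneg) auto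
  have "B \<le> (\<Sum>i\<in>?A. x i * G)"
    unfolding B_def G_def using x_nonneg top_max by (intro sum_mono mult_left_mono) auto
  also have "\<dots> \<le> (1 - x n) * G"
    using sum_below_top_le \<open>0 \<le> G\<close> by (simp add: mult_right_mono flip: sum_distrib_right)
  finally have "B \<le> (1 - x n) * G" .
  have "(\<Sum>i\<in>{1..n}. x i * (f {i} - f {})) = x n * G + B"
    unfolding G_def B_def using n_pos by (simp add: sum.last_plus)
  then have "concave_closure n f x \<le> f {} + x n * G + B"
    using concave_closure_le[OF assms(3)] pi_witness_feasible
    unfolding pi_feasible_def by fastforce
  moreover have "f {} + x n * G + (1 - x n) * B \<le> upper_pi_ext n f x"
    using pi_witness_value_ge[OF assms(2)] le_upper_pi_ext[OF assms(3) pi_witness_feasible]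
    unfolding G_def B_def by linarith
  moreover have "3 * (f {} + x n * G + B) \<le> 4 * (f {} + x n * G + (1 - x n) * B)"
    using four_thirds_bound[OF assms(1) \<open>0 \<le> G\<close> top_nonneg \<open>0 \<le> B\<close> \<open>B \<le> (1 - x n) * G\<close>] .
  ultimately have "3 * concave_closure n f x \<le> 4 * upper_pi_ext n f x"
    by (smt (verit))
  then show ?thesis by simp
qed

end

theorem mainTheorem12:
  fixes n :: nat and x :: "nat \<Rightarrow> real" and f :: "nat set \<Rightarrow> real"
  assumes "n \<ge> 2"
    and "\<forall>i\<in>{1..n}. 0 \<le> x i \<and> x i \<le> 1"
    and "\<forall>i j. 1 \<le> i \<and> i \<le> j \<and> j \<le> n \<longrightarrow> x i \<le> x j"
    and "(\<Sum>i=1..n. x i) \<le> 1"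
    and "\<forall>S\<subseteq>{1..n}. f S \<ge> 0"
    and "monotone_setfun n f"
    and "submodular_setfun n f"
    and "f {n} = Max ((\<lambda>i. f {i}) ` {1..n}) \<or> (\<exists>c. \<forall>i\<in>{1..n}. f {i} = c)"
  shows "concave_closure n f x \<le> 4/3 * upper_pi_ext n f x"
proof (rule concave_closure_le_four_thirds_upper_pi_ext)
  show "1 \<le> n" using assms(1) by simp
  show "\<forall>i\<in>{1..n}. 0 \<le> x i" "(\<Sum>i=1..n. x i) \<le> 1" using assms(2,4) by auto
  show "\<forall>i\<in>{1..<n}. x i \<le> x n" using assms(3) by simp
  show "0 \<le> f {}" using assms(5) by simp
  show "\<forall>i\<in>{1..n}. f {i} \<le> f {n}"
    using assms(8) \<open>1 \<le> n\<close> by auto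
qed (use assms(6,7) in auto)

end
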